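(* Let $p\ge 2$, $d\in\{0,\dots,9\}$ and $n\ge 10^{p-1}$ be integers, and let $k=\max\{i\in\mathbb N:10^{i+p}\le n\}$ (with $k=-1$ if this set is empty). Then $$P_{(d,n,p)}=\frac{1}{n+1-10^{p-1}}\Big(P_{(d,10^{k+p}-1,p)}\times(10^{k+p}-10^{p-1})+r_{(n,d,p)}\Big),$$ where, when $k=-1$, the product $P_{(d,10^{k+p}-1,p)}\times(10^{k+p}-10^{p-1})$ is taken to be $0$, and where, with $l=\big\lfloor\frac{n-(10^{p-1}+d)10^{k+1}}{10^{k+2}}\big\rfloor+10^{p-2}$: if the $p$-th digit of $n$ is $d$, \begin{align*} r_{(n,d,p)}=&\sum_{j=10^{p-2}}^{l}\ \sum_{b=(10j+d)10^{k+1}}^{\min(n,(10j+(d+1))10^{k+1}-1)}\frac{b-((9j+d)10^{k+1}+10^{p-2}-1)}{b+1-10^{p-1}}\\ &+\sum_{j=10^{p-2}-1}^{l-1}\ \sum_{a=\max(10^{p+k},(10j+(d+1))10^{k+1})}^{(10(j+1)+d)10^{k+1}-1}\frac{10^{k+1}(j+1)-10^{p-2}}{a+1-10^{p-1}}, \end{align*} and if the $p$-th digit of $n$ is different from $d$, \begin{align*} r_{(n,d,p)}=&\sum_{j=10^{p-2}}^{l}\ \sum_{b=(10j+d)10^{k+1}}^{(10j+(d+1))10^{k+1}-1}\frac{b-((9j+d)10^{k+1}+10^{p-2}-1)}{b+1-10^{p-1}}\\ &+\sum_{j=10^{p-2}-1}^{l}\ \sum_{a=\max(10^{p+k},(10j+(d+1))10^{k+1})}^{\min(n,(10(j+1)+d)10^{k+1}-1)}\frac{10^{k+1}(j+1)-10^{p-2}}{a+1-10^{p-1}}.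 \end{align*}
   Context: For an integer $x\ge 10^{p-1}$, the "$p$-th digit of $x$" is the $p$-th digit of its decimal expansion counted from the left. For $d\in\{0,\dots,9\}$ and $m\ge 10^{p-1}$, let $N_d(m)$ be the number of integers $x$ with $10^{p-1}\le x\le m$ whose $p$-th digit is $d$. For $N\ge 10^{p-1}$, $$P_{(d,N,p)}=\frac{1}{N+1-10^{p-1}}\sum_{m=10^{p-1}}^{N}\frac{N_d(m)}{m+1-10^{p-1}},$$ the probability that the $p$-th digit of $x$ is $d$ when $m$ is chosen uniformly in $\{10^{p-1},\dots,N\}$ and then $x$ uniformly in $\{10^{p-1},\dots,m\}$. Empty sums are zero. *)

theory Defs
  imports Complex_Main
begin

definition num_digits :: "nat \<Rightarrow> nat" where
  "num_digits x = (LEAST i. x < 10 ^ i)"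

text \<open>The p-th decimal digit of x counted from the left (meaningful for x \<ge> 10^(p-1)).\<close>
definition pth_digit :: "nat \<Rightarrow> nat \<Rightarrow> nat" where
  "pth_digit p x = (x div 10 ^ (num_digits x - p)) mod 10"

definition Ncount :: "nat \<Rightarrow> nat \<Rightarrow> nat \<Rightarrow> nat" where
  "Ncount p d m = card {x. 10 ^ (p - 1) \<le> x \<and> x \<le> m \<and> pth_digit p x = d}"

definition Pprob :: "nat \<Rightarrow> nat \<Rightarrow> nat \<Rightarrow> real" where
  "Pprob d N p = (1 / (real N + 1 - 10 ^ (p - 1))) *
     (\<Sum>m\<in>{10 ^ (p - 1)..N}. real (Ncount p d m) / (real m + 1 - 10 ^ (p - 1)))"

end

theory Submission
  imports Defs
begin

text \<open>
Let \<open>T = 10^(p-2)\<close> and \<open>D = 10^(k+1)\<close>, so that \<open>n\<close> lies in the block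
\<open>[10 T D, 100 T D)\<close> of numbers with \<open>p + k + 1\<close> digits; there the \<open>p\<close>-th digit of \<open>m\<close> is
\<open>m div D mod 10\<close>. The terms of \<open>P(d,n,p)\<close> with \<open>m < 10 T D\<close> add up to
\<open>P(d, 10 T D - 1, p)\<close> times their number. For \<open>m\<close> in the block, \<open>N_d(m) = c(m) - T\<close>, where
\<open>c(m)\<close> counts all \<open>0 \<le> x \<le> m\<close> with \<open>x div D mod 10 = d\<close> (induction over the blocks).
The closed form of \<open>c\<close> is affine on each run \<open>[(10j+d) D, (10j+d+1) D)\<close> of numbers having
digit \<open>d\<close> and equals \<open>(j+1) D\<close> on the gap between the \<open>j\<close>-th and the next run; grouping the
terms of the block by runs and gaps gives \<open>r\<close>, the last run or gap being cut off at \<open>n\<close>.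
\<close>

lemma int_le_div_iff:
  fixes m q D :: int
  assumes "0 < D"
  shows "q \<le> m div D \<longleftrightarrow> q * D \<le> m"
proof
  assume "q \<le> m div D"
  then have "q * D \<le> m div D * D" using assms by (simp add: mult_right_mono)
  also have "\<dots> \<le> m" using assms by (simp add: minus_mod_eq_div_mult [symmetric])
  finally show "q * D \<le> m" .
next
  assume "q * D \<le> m"
  then have "q * D div D \<le> m div D" using assms by (rule zdiv_mono1)
  then show "q \<le> m div D" using assms by simp
qed

lemma int_div_less_iff:
  fixes m q D :: int
  assumes "0 < D"
  shows "m div D < q \<longleftrightarrow> m < q * D"
  using int_le_div_iff [OF assms, of q m] by linarith

text \<open>
For \<open>D > 0\<close> and \<open>0 \<le> d \<le> 9\<close>, \<open>digit_count D d y\<close> is the number of \<open>0 \<le> x \<le> y\<close> with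
\<open>x div D mod 10 = d\<close>: each complete period of \<open>10 D\<close> numbers contributes \<open>D\<close>, the incomplete
one \<open>D\<close>, \<open>y mod D + 1\<close> or \<open>0\<close>. It lives on \<open>int\<close> so that the empty range \<open>y = -1\<close> is covered.
\<close>
definition digit_count :: "int \<Rightarrow> int \<Rightarrow> int \<Rightarrow> int" where
  "digit_count D d y = y div D div 10 * D +
     (if d < y div D mod 10 then D else if y div D mod 10 = d then y mod D + 1 else 0)"

lemma digit_count_succ:
  assumes "0 < D" "0 \<le> d" "d \<le> 9"
  shows "digit_count D d (y + 1) = digit_count D d y + (if (y + 1) div D mod 10 = d then 1 else 0)"
proof -
  define q r where "q = y div D" and "r = y mod D"
  have y: "y = D * q + r" and r: "0 \<le> r" "r < D"
    using assms by (simp_all add: q_def r_def)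
  show ?thesis
  proof (cases "r + 1 < D")
    case True
    then have "(y + 1) div D = q" "(y + 1) mod D = r + 1"
      using y r by (simp_all add: int_div_pos_eq int_mod_pos_eq)
    then show ?thesis unfolding digit_count_def q_def r_def by simp
  next
    case False
    then have r1: "r + 1 = D" using r by simp
    then have "y + 1 = D * (q + 1) + 0" using y by (simp add: algebra_simps)
    then have qr: "(y + 1) div D = q + 1" "(y + 1) mod D = 0"
      using assms by (simp_all add: int_div_pos_eq int_mod_pos_eq)
    have "0 \<le> q mod 10" "q mod 10 < 10" by simp_all
    then consider "q mod 10 = 9" | "q mod 10 < 9" by linarith
    then show ?thesis
    proof cases
      case 1
      have "q = 10 * (q div 10) + q mod 10" by simp
      then have "q + 1 = 10 * (q div 10 + 1) + 0" using 1 by simp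
      from int_div_pos_eq [OF this] int_mod_pos_eq [OF this]
      have "(q + 1) div 10 = q div 10 + 1" "(q + 1) mod 10 = 0" by simp_all
      with 1 show ?thesis
        using assms unfolding digit_count_def qr q_def [symmetric] r_def [symmetric] r1
        by (auto simp: algebra_simps)
    next
      case 2
      have "q + 1 = 10 * (q div 10) + (q mod 10 + 1)" by simp
      from int_div_pos_eq [OF this] int_mod_pos_eq [OF this]
      have "(q + 1) div 10 = q div 10" "(q + 1) mod 10 = q mod 10 + 1"
        using 2 \<open>0 \<le> q mod 10\<close> by simp_all
      with 2 show ?thesis unfolding digit_count_def qr q_def [symmetric] r_def [symmetric] r1 by auto
    qed
  qed
qed

lemma digit_count_minus_one:
  assumes "0 < D" "0 \<le> d" "d \<le> 9"
  shows "digit_count D d (- 1) = 0"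
proof -
  have "- 1 = D * (- 1) + (D - 1)" by simp
  from int_div_pos_eq [OF this] int_mod_pos_eq [OF this]
  have "(- 1) div D = - 1" "(- 1) mod D = D - 1" using assms by simp_all
  then show ?thesis using assms unfolding digit_count_def by auto
qed

lemma card_digit_eq_less:
  assumes "0 < D" "d \<le> 9"
  shows "int (card {x. x < a \<and> x div D mod 10 = d}) = digit_count (int D) (int d) (int a - 1)"
proof (induction a)
  case 0
  then show ?case using digit_count_minus_one assms by simp
next
  case (Suc a)
  have "{x. x < Suc a \<and> x div D mod 10 = d} =
      {x. x < a \<and> x div D mod 10 = d} \<union> (if a div D mod 10 = d then {a} else {})"
    by (auto simp: less_Suc_eq)
  then have "card {x. x < Suc a \<and> x div D mod 10 = d} =
      card {x. x < a \<and> x div D mod 10 = d} + (if a div D mod 10 = d then 1 else 0)"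
    by (simp add: card_Un_disjoint)
  moreover have "int (a div D mod 10) = int a div int D mod 10"
    by (simp add: zdiv_int zmod_int)
  ultimately show ?case
    using Suc.IH digit_count_succ [of "int D" "int d" "int a - 1"] assms by auto
qed

lemma digit_count_period_end:
  assumes "0 < T" "0 < D" "0 \<le> d" "d \<le> 9"
  shows "digit_count D d (10 * T * D - 1) = T * D"
proof -
  have "10 * T * D - 1 = D * (10 * T - 1) + (D - 1)" by (simp add: algebra_simps)
  from int_div_pos_eq [OF this] int_mod_pos_eq [OF this]
  have y: "(10 * T * D - 1) div D = 10 * T - 1" "(10 * T * D - 1) mod D = D - 1" using assms by simp_all
  have "10 * T - 1 = 10 * (T - 1) + 9" by simp
  from int_div_pos_eq [OF this] int_mod_pos_eq [OF this]
  have q: "(10 * T - 1) div 10 = T - 1" "(10 * T - 1) mod 10 = 9" by simp_all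
  show ?thesis using assms unfolding digit_count_def y q by (auto simp: algebra_simps)
qed

lemma card_digit_eq_between:
  assumes "0 < D" "d \<le> 9" "a \<le> Suc m"
  shows "int (card {x. a \<le> x \<and> x \<le> m \<and> x div D mod 10 = d}) =
    digit_count (int D) (int d) (int m) - digit_count (int D) (int d) (int a - 1)"
proof -
  have "{x. x < Suc m \<and> x div D mod 10 = d} =
      {x. x < a \<and> x div D mod 10 = d} \<union> {x. a \<le> x \<and> x \<le> m \<and> x div D mod 10 = d}"
    using assms(3) by auto
  then have "card {x. x < Suc m \<and> x div D mod 10 = d} =
      card {x. x < a \<and> x div D mod 10 = d} + card {x. a \<le> x \<and> x \<le> m \<and> x div D mod 10 = d}"
    by (simp add: card_Un_disjoint disjoint_iff)
  then have "int (card {x. a \<le> x \<and> x \<le> m \<and> x div D mod 10 = d}) =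
      int (card {x. x < Suc m \<and> x div D mod 10 = d}) - int (card {x. x < a \<and> x div D mod 10 = d})"
    by simp
  then show ?thesis unfolding card_digit_eq_less [OF assms(1,2)] by simp
qed

lemma num_digits_eq:
  assumes "10 ^ i \<le> x" "x < 10 ^ Suc i"
  shows "num_digits x = Suc i"
  unfolding num_digits_def
proof (rule Least_equality)
  fix j assume "x < 10 ^ j"
  with assms(1) have "(10::nat) ^ i < 10 ^ j" by linarith
  then show "Suc i \<le> j" by simp
qed (fact assms(2))

lemma pth_digit_eq:
  assumes "1 \<le> p" "10 ^ (p - 1) * 10 ^ s \<le> x" "x < 10 ^ p * 10 ^ s"
  shows "pth_digit p x = x div 10 ^ s mod 10"
proof -
  have "num_digits x = Suc (p - 1 + s)"
  proof (rule num_digits_eq)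
    show "10 ^ (p - 1 + s) \<le> x" unfolding power_add by (fact assms(2))
    have "Suc (p - 1 + s) = p + s" using assms(1) by simp
    then show "x < 10 ^ Suc (p - 1 + s)" using assms(3) by (simp only: power_add)
  qed
  then show ?thesis unfolding pth_digit_def using assms(1) by simp
qed

lemma Ncount_split:
  assumes "10 ^ (p - 1) \<le> a" "a \<le> Suc m"
  shows "Ncount p d m = Ncount p d (a - 1) + card {x. a \<le> x \<and> x \<le> m \<and> pth_digit p x = d}"
proof -
  let ?P = "\<lambda>x. pth_digit p x = d"
  have "a \<ge> 1" using assms(1) order.trans [of 1 "10 ^ (p - 1)" a] by simp
  then have "{x. 10 ^ (p - 1) \<le> x \<and> x \<le> m \<and> ?P x} =
      {x. 10 ^ (p - 1) \<le> x \<and> x \<le> a - 1 \<and> ?P x} \<union> {x. a \<le> x \<and> x \<le> m \<and> ?P x}"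
    using assms by auto
  moreover have "finite {x. 10 ^ (p - 1) \<le> x \<and> x \<le> a - 1 \<and> ?P x}"
    by (rule finite_subset [of _ "{..a - 1}"]) auto
  moreover have "finite {x. a \<le> x \<and> x \<le> m \<and> ?P x}"
    by (rule finite_subset [of _ "{..m}"]) auto
  ultimately show ?thesis
    unfolding Ncount_def using \<open>a \<ge> 1\<close> by (subst card_Un_disjoint [symmetric]) auto
qed

lemma power_pred_eq_mult:
  assumes "2 \<le> p"
  shows "(x :: 'a :: monoid_mult) ^ (p - 1) = x * x ^ (p - 2)"
proof -
  have "p - 1 = Suc (p - 2)" using assms by simp
  then show ?thesis by simp
qed

lemma Ncount_on_block:
  assumes "2 \<le> p" "d \<le> 9" "10 ^ (p - 1) * 10 ^ e \<le> m" "m < 10 ^ p * 10 ^ e"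
  shows "int (Ncount p d m) = int (Ncount p d (10 ^ (p - 1) * 10 ^ e - 1))
    + digit_count (10 ^ e) (int d) (int m) - 10 ^ (p - 2) * 10 ^ e"
proof -
  define a :: nat where "a = 10 ^ (p - 1) * 10 ^ e"
  have "pth_digit p x = x div 10 ^ e mod 10" if "a \<le> x" "x \<le> m" for x
    using that assms by (intro pth_digit_eq) (simp_all add: a_def)
  then have "{x. a \<le> x \<and> x \<le> m \<and> pth_digit p x = d} = {x. a \<le> x \<and> x \<le> m \<and> x div 10 ^ e mod 10 = d}"
    by auto
  moreover have "int a - 1 = 10 * 10 ^ (p - 2) * 10 ^ e - 1"
    using power_pred_eq_mult [OF assms(1)] by (simp add: a_def)
  moreover have "digit_count (10 ^ e) (int d) (10 * 10 ^ (p - 2) * 10 ^ e - 1) = 10 ^ (p - 2) * 10 ^ e"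
    using assms(2) by (intro digit_count_period_end) simp_all
  ultimately show ?thesis
    using Ncount_split [of p a m d] card_digit_eq_between [of "10 ^ e" d a m] assms
    by (simp add: a_def)
qed

lemma Ncount_eq_0: "m < 10 ^ (p - 1) \<Longrightarrow> Ncount p d m = 0"
  unfolding Ncount_def by auto

lemma Ncount_before_block:
  assumes "2 \<le> p" "d \<le> 9"
  shows "int (Ncount p d (10 ^ (p - 1) * 10 ^ e - 1)) = 10 ^ (p - 2) * 10 ^ e - 10 ^ (p - 2)"
proof (induction e)
  case 0
  have "Ncount p d (10 ^ (p - 1) - 1) = 0" by (rule Ncount_eq_0) simp
  then show ?case by simp
next
  case (Suc e)
  define m :: nat where "m = 10 ^ (p - 1) * 10 ^ Suc e - 1"
  have "p = Suc (p - 1)" using assms(1) by simp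
  then have p: "(10::nat) ^ p = 10 * 10 ^ (p - 1)" "(10::int) ^ (p - 1) = 10 * 10 ^ (p - 2)"
    by (metis power_Suc) (rule power_pred_eq_mult [OF assms(1)])
  have m: "m = 10 * (10 ^ (p - 1) * 10 ^ e) - 1" unfolding m_def by (simp add: ac_simps)
  have "0 < (10::nat) ^ (p - 1) * 10 ^ e" by simp
  then have "10 ^ (p - 1) * 10 ^ e \<le> m" "m < 10 ^ p * 10 ^ e" unfolding m p(1) by (simp_all add: mult.assoc)
  moreover have "int m = 10 * 10 ^ (p - 1) * 10 ^ e - 1" by (simp add: m_def of_nat_diff)
  moreover have "digit_count (10 ^ e) (int d) (10 * 10 ^ (p - 1) * 10 ^ e - 1) = 10 ^ (p - 1) * 10 ^ e"
    using assms(2) by (intro digit_count_period_end) simp_all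
  ultimately have "int (Ncount p d m) = 10 ^ (p - 2) * 10 ^ e - 10 ^ (p - 2) + 10 ^ (p - 1) * 10 ^ e - 10 ^ (p - 2) * 10 ^ e"
    using Ncount_on_block [OF assms, of e m] Suc.IH by simp
  also have "\<dots> = 10 ^ (p - 2) * 10 ^ Suc e - 10 ^ (p - 2)" unfolding p(2) by simp
  finally show ?case unfolding m_def .
qed

lemma Ncount_eq_digit_count:
  assumes "2 \<le> p" "d \<le> 9" "10 ^ (p - 1) * 10 ^ e \<le> m" "m < 10 ^ p * 10 ^ e"
  shows "int (Ncount p d m) = digit_count (10 ^ e) (int d) (int m) - 10 ^ (p - 2)"
  using Ncount_on_block [OF assms] Ncount_before_block [OF assms(1,2)] by simp

lemma eq_ten_times_plus_iff:
  fixes q j d :: int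
  assumes "0 \<le> d" "d \<le> 9"
  shows "q = 10 * j + d \<longleftrightarrow> q mod 10 = d \<and> q div 10 = j"
proof
  assume "q = 10 * j + d"
  from int_mod_pos_eq [OF this] int_div_pos_eq [OF this]
  show "q mod 10 = d \<and> q div 10 = j" using assms by simp
next
  assume "q mod 10 = d \<and> q div 10 = j"
  then show "q = 10 * j + d" using div_mult_mod_eq [of q 10] by simp
qed

lemma between_ten_times_plus_iff:
  fixes q j d :: int
  assumes "0 \<le> d" "d \<le> 9"
  shows "10 * j + d < q \<and> q < 10 * j + d + 10 \<longleftrightarrow> q mod 10 \<noteq> d \<and> (q - d - 1) div 10 = j"
proof
  assume q: "10 * j + d < q \<and> q < 10 * j + d + 10"
  have "q - d - 1 = 10 * j + (q - d - 1 - 10 * j)" by simp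
  from int_div_pos_eq [OF this] have "(q - d - 1) div 10 = j" using q by simp
  moreover have "q mod 10 \<noteq> d"
  proof
    assume "q mod 10 = d"
    then have "q = 10 * (q div 10) + d" using eq_ten_times_plus_iff [OF assms] by simp
    with q have "10 * j < 10 * (q div 10)" "10 * (q div 10) < 10 * (j + 1)" by simp_all
    then show False by simp
  qed
  ultimately show "q mod 10 \<noteq> d \<and> (q - d - 1) div 10 = j" by simp
next
  assume q: "q mod 10 \<noteq> d \<and> (q - d - 1) div 10 = j"
  then have "j * 10 \<le> q - d - 1" "q - d - 1 < (j + 1) * 10"
    using int_le_div_iff [of 10 j "q - d - 1"] int_div_less_iff [of 10 "q - d - 1" "j + 1"] by simp_all
  moreover have "q \<noteq> 10 * (j + 1) + d" using q eq_ten_times_plus_iff [OF assms] by blast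
  ultimately show "10 * j + d < q \<and> q < 10 * j + d + 10" by simp
qed

lemma digit_count_at_digit:
  assumes "0 < D" "0 \<le> d" "d \<le> 9" "y div D = 10 * j + d"
  shows "digit_count D d y = y - (9 * j + d) * D + 1"
proof -
  have "y div D mod 10 = d" "y div D div 10 = j"
    using eq_ten_times_plus_iff [OF assms(2,3)] assms(4) by simp_all
  moreover have "y mod D = y - (10 * j + d) * D"
    using assms(4) by (simp add: minus_div_mult_eq_mod [symmetric])
  ultimately show ?thesis unfolding digit_count_def by (simp add: algebra_simps)
qed

lemma digit_count_between_digits:
  assumes "0 < D" "0 \<le> d" "d \<le> 9" "10 * j + d < y div D" "y div D < 10 * j + d + 10"
  shows "digit_count D d y = (j + 1) * D"
proof -
  define q where "q = y div D"
  have q: "q = 10 * (q div 10) + q mod 10" "0 \<le> q mod 10" "q mod 10 < 10" by simp_all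
  have bounds: "10 * j + d < q" "q < 10 * j + d + 10" using assms(4,5) by (simp_all add: q_def)
  have "q mod 10 \<noteq> d" using between_ten_times_plus_iff [OF assms(2,3)] bounds by blast
  moreover have "q div 10 = j" if "d < q mod 10"
  proof -
    have "j - 1 < q div 10" using q bounds that assms(2) by linarith
    moreover have "q div 10 < j + 1" using q bounds that by linarith
    ultimately show ?thesis by simp
  qed
  moreover have "q div 10 = j + 1" if "q mod 10 < d"
  proof -
    have "j < q div 10" using q bounds that by linarith
    moreover have "q div 10 < j + 2" using q bounds that assms(3) by linarith
    ultimately show ?thesis by simp
  qed
  ultimately show ?thesis unfolding digit_count_def q_def [symmetric] by (auto simp: algebra_simps)
qed

lemma sum_group_by:
  fixes g :: "'a \<Rightarrow> 'c::comm_monoid_add"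
  assumes "finite J" "\<And>j. j \<in> J \<Longrightarrow> finite (I j)"
    and "\<And>j m. j \<in> J \<Longrightarrow> m \<in> I j \<Longrightarrow> m \<in> S \<and> \<pi> m = j \<and> h j m = g m"
    and "\<And>m. m \<in> S \<Longrightarrow> \<pi> m \<in> J \<and> m \<in> I (\<pi> m)"
  shows "(\<Sum>j\<in>J. \<Sum>m\<in>I j. h j m) = (\<Sum>m\<in>S. g m)"
proof -
  have "(\<Sum>j\<in>J. \<Sum>m\<in>I j. h j m) = (\<Sum>(j, m)\<in>Sigma J I. h j m)"
    using assms(1,2) by (simp add: sum.Sigma)
  also have "\<dots> = (\<Sum>m\<in>S. g m)"
    by (rule sum.reindex_bij_witness [of _ "\<lambda>m. (\<pi> m, m)" snd]) (use assms(3,4) in auto)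
  finally show ?thesis .
qed

lemma sum_over_digit_blocks:
  fixes D T d l n :: int
  assumes "0 < D" "0 \<le> d" "d \<le> 9" "n < (10 * l + d + 10) * D"
  shows "(\<Sum>j\<in>{T..l}. \<Sum>b\<in>{(10 * j + d) * D .. min n ((10 * j + (d + 1)) * D - 1)}.
      real_of_int (b - ((9 * j + d) * D + T - 1)) / real_of_int (b + 1 - 10 * T))
    = (\<Sum>m\<in>{m\<in>{10 * T * D..n}. m div D mod 10 = d}.
      real_of_int (digit_count D d m - T) / real_of_int (m + 1 - 10 * T))"
proof (rule sum_group_by [where \<pi> = "\<lambda>m. m div D div 10"])
  fix j b
  assume j: "j \<in> {T..l}" and b: "b \<in> {(10 * j + d) * D .. min n ((10 * j + (d + 1)) * D - 1)}"
  then have q: "b div D = 10 * j + d"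
    using int_le_div_iff [OF assms(1), of "10 * j + d" b] int_div_less_iff [OF assms(1), of b "10 * j + (d + 1)"]
    by simp
  have "10 * T * D \<le> (10 * j + d) * D" using j assms(1,2) by (simp add: mult_right_mono)
  then have "b \<in> {m\<in>{10 * T * D..n}. m div D mod 10 = d} \<and> b div D div 10 = j"
    using b q eq_ten_times_plus_iff [OF assms(2,3)] by simp
  moreover have num: "b - ((9 * j + d) * D + T - 1) = digit_count D d b - T"
    using digit_count_at_digit [OF assms(1-3) q] by simp
  ultimately show "b \<in> {m\<in>{10 * T * D..n}. m div D mod 10 = d} \<and> b div D div 10 = j \<and>
      real_of_int (b - ((9 * j + d) * D + T - 1)) / real_of_int (b + 1 - 10 * T) =
      real_of_int (digit_count D d b - T) / real_of_int (b + 1 - 10 * T)"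
    by (simp only: num)
next
  fix m
  assume m: "m \<in> {m\<in>{10 * T * D..n}. m div D mod 10 = d}"
  define j where "j = m div D div 10"
  have q: "m div D = 10 * j + d" using m eq_ten_times_plus_iff [OF assms(2,3)] by (simp add: j_def)
  have "10 * T \<le> m div D" using m int_le_div_iff [OF assms(1)] by (simp add: mult.assoc)
  moreover have "m div D < 10 * l + d + 10"
    using m assms(4) int_div_less_iff [OF assms(1)] by simp
  ultimately have "j \<in> {T..l}" using q assms(3) by simp
  moreover have "(10 * j + d) * D \<le> m" "m < (10 * j + (d + 1)) * D"
    using q int_le_div_iff [OF assms(1), of "10 * j + d" m] int_div_less_iff [OF assms(1), of m "10 * j + (d + 1)"]
    by simp_all
  ultimately show "m div D div 10 \<in> {T..l} \<and>
      m \<in> {(10 * (m div D div 10) + d) * D .. min n ((10 * (m div D div 10) + (d + 1)) * D - 1)}"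
    using m unfolding j_def by simp
qed auto

lemma sum_over_digit_gaps:
  fixes D T d l n :: int
  assumes "0 < D" "0 \<le> d" "d \<le> 9" "n < (10 * l + d + 10) * D"
  shows "(\<Sum>j\<in>{T - 1..l}. \<Sum>a\<in>{max (10 * T * D) ((10 * j + (d + 1)) * D) .. min n ((10 * (j + 1) + d) * D - 1)}.
      real_of_int (D * (j + 1) - T) / real_of_int (a + 1 - 10 * T))
    = (\<Sum>m\<in>{m\<in>{10 * T * D..n}. m div D mod 10 \<noteq> d}.
      real_of_int (digit_count D d m - T) / real_of_int (m + 1 - 10 * T))"
proof (rule sum_group_by [where \<pi> = "\<lambda>m. (m div D - d - 1) div 10"])
  fix j a
  assume j: "j \<in> {T - 1..l}"
    and a: "a \<in> {max (10 * T * D) ((10 * j + (d + 1)) * D) .. min n ((10 * (j + 1) + d) * D - 1)}"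
  then have q: "10 * j + d < a div D" "a div D < 10 * j + d + 10"
    using int_le_div_iff [OF assms(1), of "10 * j + (d + 1)" a]
      int_div_less_iff [OF assms(1), of a "10 * (j + 1) + d"]
    by simp_all
  then have "a div D mod 10 \<noteq> d \<and> (a div D - d - 1) div 10 = j"
    using between_ten_times_plus_iff [OF assms(2,3), of j "a div D"] by blast
  then have "a \<in> {m\<in>{10 * T * D..n}. m div D mod 10 \<noteq> d} \<and> (a div D - d - 1) div 10 = j"
    using a by simp
  moreover have num: "D * (j + 1) - T = digit_count D d a - T"
    using digit_count_between_digits [OF assms(1-3) q] by simp
  ultimately show "a \<in> {m\<in>{10 * T * D..n}. m div D mod 10 \<noteq> d} \<and> (a div D - d - 1) div 10 = j \<and>
      real_of_int (D * (j + 1) - T) / real_of_int (a + 1 - 10 * T) =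
      real_of_int (digit_count D d a - T) / real_of_int (a + 1 - 10 * T)"
    by (simp only: num)
next
  fix m
  assume m: "m \<in> {m\<in>{10 * T * D..n}. m div D mod 10 \<noteq> d}"
  define q where "q = m div D"
  define j where "j = (q - d - 1) div 10"
  have q: "10 * j + d < q" "q < 10 * j + d + 10"
    using m between_ten_times_plus_iff [OF assms(2,3), of j q] by (simp_all add: j_def q_def)
  have "10 * T \<le> q" using m int_le_div_iff [OF assms(1)] by (simp add: q_def mult.assoc)
  with q assms(3) have "T - 1 \<le> j" by presburger
  moreover have "q < 10 * l + d + 10"
    using m assms(4) int_div_less_iff [OF assms(1)] by (simp add: q_def)
  with q have "j \<le> l" by presburger
  ultimately have "j \<in> {T - 1..l}" by simp
  moreover have "(10 * j + (d + 1)) * D \<le> m" "m < (10 * (j + 1) + d) * D"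
    using q int_le_div_iff [OF assms(1), of "10 * j + (d + 1)" m]
      int_div_less_iff [OF assms(1), of m "10 * (j + 1) + d"]
    by (simp_all add: q_def)
  ultimately show "(m div D - d - 1) div 10 \<in> {T - 1..l} \<and>
      m \<in> {max (10 * T * D) ((10 * ((m div D - d - 1) div 10) + (d + 1)) * D)
        .. min n ((10 * ((m div D - d - 1) div 10 + 1) + d) * D - 1)}"
    using m unfolding j_def q_def by simp
qed auto

lemma digit_block_index_bounds:
  fixes D T d n :: int
  assumes "0 < D"
  defines "l \<equiv> (n - (10 * T + d) * D) div (10 * D) + T"
  shows "(10 * l + d) * D \<le> n" "n < (10 * l + d + 10) * D"
proof -
  define z where "z = n - (10 * T + d) * D"
  define w where "w = z div (10 * D)"
  have "w * (10 * D) \<le> z" "z < (w + 1) * (10 * D)"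
    using int_le_div_iff [of "10 * D" w z] int_div_less_iff [of "10 * D" z "w + 1"] assms(1)
    by (simp_all add: w_def)
  moreover have "l = w + T" by (simp add: l_def w_def z_def)
  ultimately show "(10 * l + d) * D \<le> n" "n < (10 * l + d + 10) * D"
    by (simp_all add: z_def algebra_simps)
qed

lemma sum_over_digit_blocks_min_cancel:
  fixes D d l n :: int and F :: "int \<Rightarrow> int \<Rightarrow> 'a::comm_monoid_add"
  assumes "0 < D" "(10 * l + (d + 1)) * D \<le> n"
  shows "(\<Sum>j\<in>{T..l}. \<Sum>b\<in>{(10 * j + d) * D .. min n ((10 * j + (d + 1)) * D - 1)}. F j b) =
    (\<Sum>j\<in>{T..l}. \<Sum>b\<in>{(10 * j + d) * D .. (10 * j + (d + 1)) * D - 1}. F j b)"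
proof (rule sum.cong)
  fix j assume "j \<in> {T..l}"
  then have "(10 * j + (d + 1)) * D \<le> (10 * l + (d + 1)) * D" using assms(1) by (simp add: mult_right_mono)
  then show "(\<Sum>b\<in>{(10 * j + d) * D .. min n ((10 * j + (d + 1)) * D - 1)}. F j b) =
      (\<Sum>b\<in>{(10 * j + d) * D .. (10 * j + (d + 1)) * D - 1}. F j b)"
    using assms(2) by (simp add: min_def)
qed simp

lemma sum_over_digit_gaps_min_cancel:
  fixes D d l n M :: int and F :: "int \<Rightarrow> int \<Rightarrow> 'a::comm_monoid_add"
  assumes "0 < D" "(10 * l + d) * D \<le> n" "n < (10 * l + (d + 1)) * D"
  shows "(\<Sum>j\<in>{T - 1..l}. \<Sum>a\<in>{max M ((10 * j + (d + 1)) * D) .. min n ((10 * (j + 1) + d) * D - 1)}.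
      F j a) =
    (\<Sum>j\<in>{T - 1..l - 1}. \<Sum>a\<in>{max M ((10 * j + (d + 1)) * D) .. (10 * (j + 1) + d) * D - 1}. F j a)"
    (is "sum ?gap {T - 1..l} = ?rhs")
proof -
  have "sum ?gap {T - 1..l} = sum ?gap {T - 1..l - 1}"
    using assms(3) by (intro sum.mono_neutral_right) auto
  also have "\<dots> = ?rhs"
  proof (rule sum.cong)
    fix j assume "j \<in> {T - 1..l - 1}"
    then have "(10 * (j + 1) + d) * D \<le> (10 * l + d) * D" using assms(1) by (simp add: mult_right_mono)
    then show "(\<Sum>a\<in>{max M ((10 * j + (d + 1)) * D) .. min n ((10 * (j + 1) + d) * D - 1)}. F j a) =
        (\<Sum>a\<in>{max M ((10 * j + (d + 1)) * D) .. (10 * (j + 1) + d) * D - 1}. F j a)"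
      using assms(2) by (simp add: min_def)
  qed simp
  finally show ?thesis .
qed

lemma sum_digit_count_ratio:
  fixes D T d n :: int
  assumes "0 < D" "0 \<le> d" "d \<le> 9"
  defines "l \<equiv> (n - (10 * T + d) * D) div (10 * D) + T"
  shows "(\<Sum>m\<in>{10 * T * D..n}. real_of_int (digit_count D d m - T) / real_of_int (m + 1 - 10 * T)) =
    (if n div D mod 10 = d then
      (\<Sum>j\<in>{T..l}. \<Sum>b\<in>{(10 * j + d) * D .. min n ((10 * j + (d + 1)) * D - 1)}.
        real_of_int (b - ((9 * j + d) * D + T - 1)) / real_of_int (b + 1 - 10 * T))
      + (\<Sum>j\<in>{T - 1..l - 1}. \<Sum>a\<in>{max (10 * T * D) ((10 * j + (d + 1)) * D) .. (10 * (j + 1) + d) * D - 1}.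
        real_of_int (D * (j + 1) - T) / real_of_int (a + 1 - 10 * T))
    else
      (\<Sum>j\<in>{T..l}. \<Sum>b\<in>{(10 * j + d) * D .. (10 * j + (d + 1)) * D - 1}.
        real_of_int (b - ((9 * j + d) * D + T - 1)) / real_of_int (b + 1 - 10 * T))
      + (\<Sum>j\<in>{T - 1..l}. \<Sum>a\<in>{max (10 * T * D) ((10 * j + (d + 1)) * D) .. min n ((10 * (j + 1) + d) * D - 1)}.
        real_of_int (D * (j + 1) - T) / real_of_int (a + 1 - 10 * T)))"
    (is "sum ?f _ = (if _ then ?B + ?A' else ?B' + ?A)")
proof -
  note n_bounds = digit_block_index_bounds [OF assms(1), of n T d, folded l_def]
  define q where "q = n div D"
  have q_bounds: "10 * l + d \<le> q" "q < 10 * l + d + 10"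
    using n_bounds int_le_div_iff [OF assms(1)] int_div_less_iff [OF assms(1)] by (simp_all add: q_def)
  let ?S = "{m\<in>{10 * T * D..n}. m div D mod 10 = d}" and ?S' = "{m\<in>{10 * T * D..n}. m div D mod 10 \<noteq> d}"
  have "sum ?f ?S + sum ?f ?S' = sum ?f (?S \<union> ?S')"
    by (rule sum.union_disjoint [symmetric]) (auto intro: finite_subset [of _ "{10 * T * D..n}"])
  also have "?S \<union> ?S' = {10 * T * D..n}" by auto
  finally have split: "sum ?f {10 * T * D..n} = ?B + ?A"
    using sum_over_digit_blocks [OF assms(1-3) n_bounds(2)] sum_over_digit_gaps [OF assms(1-3) n_bounds(2)]
    by simp
  show ?thesis
  proof (cases "q mod 10 = d")
    case True
    then have "q = 10 * l + d" using q_bounds by presburger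
    then have "n < (10 * l + (d + 1)) * D"
      using int_div_less_iff [OF assms(1), of n "10 * l + (d + 1)"] by (simp add: q_def)
    then have "?A = ?A'" by (rule sum_over_digit_gaps_min_cancel [OF assms(1) n_bounds(1)])
    then show ?thesis using True split by (simp add: q_def)
  next
    case False
    then have "q \<noteq> 10 * l + d" using eq_ten_times_plus_iff [OF assms(2,3)] by blast
    then have "(10 * l + (d + 1)) * D \<le> n"
      using q_bounds int_le_div_iff [OF assms(1), of "10 * l + (d + 1)" n] by (simp add: q_def)
    then have "?B = ?B'" by (rule sum_over_digit_blocks_min_cancel [OF assms(1)])
    then show ?thesis using False split by (simp add: q_def)
  qed
qed

lemma greatest_power_le_bounds:
  fixes n p :: nat
  assumes "10 ^ p \<le> n"
  defines "G \<equiv> GREATEST i. 10 ^ (i + p) \<le> n"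
  shows "10 ^ (G + p) \<le> n" "n < 10 ^ (Suc G + p)"
proof -
  have bounded: "i \<le> n" if "10 ^ (i + p) \<le> n" for i
  proof -
    have "i < (10::nat) ^ i" by (induction i) auto
    also have "\<dots> \<le> 10 ^ (i + p)" by (rule power_increasing) simp_all
    finally show ?thesis using that by simp
  qed
  have "10 ^ (0 + p) \<le> n" using assms(1) by simp
  then show "10 ^ (G + p) \<le> n" unfolding G_def by (rule GreatestI_nat) (use bounded in blast)
  show "n < 10 ^ (Suc G + p)"
  proof (rule ccontr)
    assume "\<not> n < 10 ^ (Suc G + p)"
    then have "Suc G \<le> G" unfolding G_def by (intro Greatest_le_nat) (use bounded in auto)
    then show False by simp
  qed
qed

lemma Pprob_mult_eq_sum:
  assumes "10 ^ (p - 1) \<le> N"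
  shows "Pprob d N p * (real N + 1 - 10 ^ (p - 1)) =
    (\<Sum>m\<in>{10 ^ (p - 1)..N}. real (Ncount p d m) / (real m + 1 - 10 ^ (p - 1)))"
proof -
  have "(10::real) ^ (p - 1) \<le> real N" using assms by (metis of_nat_le_iff of_nat_numeral of_nat_power)
  then have "real N + 1 - 10 ^ (p - 1) \<noteq> 0" by linarith
  then show ?thesis unfolding Pprob_def by simp
qed

lemma sum_Ncount_ratio_on_block:
  assumes "2 \<le> p" "d \<le> 9" "10 ^ (p - 1) * 10 ^ e \<le> n" "n < 10 ^ p * 10 ^ e"
  shows "(\<Sum>m\<in>{10 ^ (p - 1) * 10 ^ e..n}. real (Ncount p d m) / (real m + 1 - 10 ^ (p - 1))) =
    (\<Sum>m\<in>{10 * 10 ^ (p - 2) * 10 ^ e..int n}.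
      real_of_int (digit_count (10 ^ e) (int d) m - 10 ^ (p - 2)) / real_of_int (m + 1 - 10 * 10 ^ (p - 2)))"
    (is "?lhs = sum ?g _")
proof -
  define a :: nat where "a = 10 ^ (p - 1) * 10 ^ e"
  have p: "(10::int) ^ (p - 1) = 10 * 10 ^ (p - 2)" by (rule power_pred_eq_mult [OF assms(1)])
  then have "{10 * 10 ^ (p - 2) * 10 ^ e..int n} = int ` {a..n}"
    by (simp add: a_def image_int_atLeastAtMost)
  then have "sum ?g {10 * 10 ^ (p - 2) * 10 ^ e..int n} = (\<Sum>m\<in>{a..n}. ?g (int m))"
    by (simp add: sum.reindex)
  also have "\<dots> = ?lhs" unfolding a_def
  proof (rule sum.cong)
    fix m
    assume "m \<in> {10 ^ (p - 1) * 10 ^ e..n}"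
    then have "int (Ncount p d m) = digit_count (10 ^ e) (int d) (int m) - 10 ^ (p - 2)"
      using assms by (intro Ncount_eq_digit_count) auto
    then have "real (Ncount p d m) = real_of_int (digit_count (10 ^ e) (int d) (int m) - 10 ^ (p - 2))"
      by (metis of_int_of_nat_eq)
    moreover have "real m + 1 - 10 ^ (p - 1) = real_of_int (int m + 1 - 10 * 10 ^ (p - 2))"
      using power_pred_eq_mult [OF assms(1)] by simp
    ultimately show "?g (int m) = real (Ncount p d m) / (real m + 1 - 10 ^ (p - 1))" by simp
  qed simp
  finally show ?thesis ..
qed

lemma leading_block_bounds:
  fixes p n :: nat and k :: int
  assumes "1 \<le> p" "10 ^ (p - 1) \<le> n"
    and "k = (if \<exists>i::nat. 10 ^ (i + p) \<le> n then int (GREATEST i::nat. 10 ^ (i + p) \<le> n) else -1)"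
  shows "- 1 \<le> k" "10 ^ (p - 1) * 10 ^ nat (k + 1) \<le> n" "n < 10 ^ p * 10 ^ nat (k + 1)"
proof -
  have p: "10 ^ (p - 1) * 10 ^ Suc i = (10::nat) ^ (i + p)" for i
  proof -
    have "p - 1 + Suc i = i + p" using assms(1) by simp
    then show ?thesis by (metis power_add)
  qed
  show "- 1 \<le> k" using assms(3) by simp
  have "10 ^ (p - 1) * 10 ^ nat (k + 1) \<le> n \<and> n < 10 ^ p * 10 ^ nat (k + 1)"
  proof (cases "\<exists>i::nat. 10 ^ (i + p) \<le> n")
    case True
    define G where "G = (GREATEST i. 10 ^ (i + p) \<le> n)"
    from True obtain i where "10 ^ (i + p) \<le> n" by blast
    moreover have "(10::nat) ^ p \<le> 10 ^ (i + p)" by (rule power_increasing) simp_all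
    ultimately have "10 ^ p \<le> n" by linarith
    then have bounds: "10 ^ (G + p) \<le> n" "n < 10 ^ (Suc G + p)"
      unfolding G_def by (rule greatest_power_le_bounds)+
    have e: "nat (k + 1) = Suc G" using True assms(3) by (simp add: G_def)
    have "10 ^ (p - 1) * 10 ^ nat (k + 1) = (10::nat) ^ (G + p)"
      "10 ^ p * 10 ^ nat (k + 1) = (10::nat) ^ (Suc G + p)"
      unfolding e by (fact p) (metis power_add add.commute)
    with bounds show ?thesis by simp
  next
    case False
    then have "n < 10 ^ p" by (metis add_0 not_le)
    then show ?thesis using False assms(2,3) by simp
  qed
  then show "10 ^ (p - 1) * 10 ^ nat (k + 1) \<le> n" "n < 10 ^ p * 10 ^ nat (k + 1)" by simp_all
qed

lemma Pprob_prefix_eq_sum: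
  fixes p :: nat and k :: int
  assumes "1 \<le> p" "- 1 \<le> k"
  shows "(if k = -1 then 0 else Pprob d (10 ^ nat (k + int p) - 1) p * (10 ^ nat (k + int p) - 10 ^ (p - 1))) =
    (\<Sum>m\<in>{10 ^ (p - 1)..10 ^ (p - 1) * 10 ^ nat (k + 1) - 1}. real (Ncount p d m) / (real m + 1 - 10 ^ (p - 1)))"
proof (cases "k = -1")
  case True
  then show ?thesis by simp
next
  case False
  define N :: nat where "N = 10 ^ nat (k + int p) - 1"
  have "nat (k + int p) = p - 1 + nat (k + 1)" using assms False by simp
  then have N: "N = 10 ^ (p - 1) * 10 ^ nat (k + 1) - 1" "real N + 1 = 10 ^ nat (k + int p)"
    by (simp_all add: N_def power_add of_nat_diff)
  have "1 \<le> nat (k + 1)" using assms(2) False by simp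
  then have "(10::nat) ^ 1 \<le> 10 ^ nat (k + 1)" by (rule power_increasing) simp
  then have "10 ^ (p - 1) * 10 \<le> 10 ^ (p - 1) * (10::nat) ^ nat (k + 1)" by simp
  moreover have "(0::nat) < 10 ^ (p - 1)" by simp
  ultimately have "10 ^ (p - 1) \<le> N" unfolding N(1) by linarith
  from Pprob_mult_eq_sum [OF this, of d] show ?thesis
    using False unfolding N_def [symmetric] N(2) [symmetric] N(1) [symmetric] by simp
qed

theorem proposition4:
  fixes p d n :: nat and k :: int
  assumes "p \<ge> 2" and "d \<le> 9" and "n \<ge> 10 ^ (p - 1)"
    and "k = (if \<exists>i::nat. 10 ^ (i + p) \<le> n
              then int (GREATEST i::nat. 10 ^ (i + p) \<le> n) else -1)"
  shows
    "let e = nat (k + 1);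
         l = (int n - (10 ^ (p - 1) + int d) * 10 ^ e) div 10 ^ (e + 1) + 10 ^ (p - 2);
         r = (if pth_digit p n = d then
                (\<Sum>j\<in>{10 ^ (p - 2)..l}.
                   \<Sum>b\<in>{(10 * j + int d) * 10 ^ e .. min (int n) ((10 * j + (int d + 1)) * 10 ^ e - 1)}.
                     real_of_int (b - ((9 * j + int d) * 10 ^ e + 10 ^ (p - 2) - 1))
                       / real_of_int (b + 1 - 10 ^ (p - 1)))
              + (\<Sum>j\<in>{10 ^ (p - 2) - 1..l - 1}.
                   \<Sum>a\<in>{max (10 ^ (p - 1 + e)) ((10 * j + (int d + 1)) * 10 ^ e) .. (10 * (j + 1) + int d) * 10 ^ e - 1}.
                     real_of_int (10 ^ e * (j + 1) - 10 ^ (p - 2))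
                       / real_of_int (a + 1 - 10 ^ (p - 1)))
              else
                (\<Sum>j\<in>{10 ^ (p - 2)..l}.
                   \<Sum>b\<in>{(10 * j + int d) * 10 ^ e .. (10 * j + (int d + 1)) * 10 ^ e - 1}.
                     real_of_int (b - ((9 * j + int d) * 10 ^ e + 10 ^ (p - 2) - 1))
                       / real_of_int (b + 1 - 10 ^ (p - 1)))
              + (\<Sum>j\<in>{10 ^ (p - 2) - 1..l}.
                   \<Sum>a\<in>{max (10 ^ (p - 1 + e)) ((10 * j + (int d + 1)) * 10 ^ e) .. min (int n) ((10 * (j + 1) + int d) * 10 ^ e - 1)}.
                     real_of_int (10 ^ e * (j + 1) - 10 ^ (p - 2))
                       / real_of_int (a + 1 - 10 ^ (p - 1))));
         prod = (if k = -1 then 0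
                 else Pprob d (10 ^ nat (k + int p) - 1) p * (10 ^ nat (k + int p) - 10 ^ (p - 1)))
     in Pprob d n p = (1 / (real n + 1 - 10 ^ (p - 1))) * (prod + r)"
proof -
  define e where "e = nat (k + 1)"
  define f where "f m = real (Ncount p d m) / (real m + 1 - 10 ^ (p - 1))" for m
  have p1: "1 \<le> p" using assms(1) by simp
  have D_pos: "(0::int) < 10 ^ e" and d9: "int d \<le> 9" using assms(2) by simp_all
  have k: "- 1 \<le> k" and block: "10 ^ (p - 1) * 10 ^ e \<le> n" "n < 10 ^ p * 10 ^ e"
    using leading_block_bounds [OF p1 assms(3,4)] by (simp_all add: e_def)
  have "pth_digit p n = n div 10 ^ e mod 10"
    using block p1 by (intro pth_digit_eq)
  then have "int (pth_digit p n) = int n div 10 ^ e mod 10" by (simp add: zdiv_int zmod_int)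
  then have digit: "pth_digit p n = d \<longleftrightarrow> int n div 10 ^ e mod 10 = int d" by auto
  have powers: "(10::int) ^ (p - 1) = 10 * 10 ^ (p - 2)" "(10::int) ^ (e + 1) = 10 * 10 ^ e"
    "(10::int) ^ (p - 1 + e) = 10 * 10 ^ (p - 2) * 10 ^ e"
    using power_pred_eq_mult [OF assms(1)] by (simp_all add: power_add)
  have "sum f {10 ^ (p - 1)..n} =
      sum f {10 ^ (p - 1)..10 ^ (p - 1) * 10 ^ e - 1} + sum f {10 ^ (p - 1) * 10 ^ e..n}"
  proof -
    define M :: nat where "M = 10 ^ (p - 1) * 10 ^ e"
    have "10 ^ (p - 1) \<le> M" "M \<le> n" using block(1) by (simp_all add: M_def)
    then have "{10 ^ (p - 1)..n} = {10 ^ (p - 1)..M - 1} \<union> {M..n}" by auto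
    then show ?thesis unfolding M_def [symmetric] by (simp add: sum.union_disjoint)
  qed
  then have "Pprob d n p = 1 / (real n + 1 - 10 ^ (p - 1)) *
      (sum f {10 ^ (p - 1)..10 ^ (p - 1) * 10 ^ e - 1} + sum f {10 ^ (p - 1) * 10 ^ e..n})"
    by (simp add: Pprob_def f_def)
  also note Pprob_prefix_eq_sum [OF p1 k, of d, folded e_def f_def, symmetric]
  also note sum_Ncount_ratio_on_block [OF assms(1,2) block, folded f_def]
  also note sum_digit_count_ratio [OF D_pos of_nat_0_le_iff d9, of "10 ^ (p - 2)" "int n"]
  finally show ?thesis unfolding Let_def e_def [symmetric] digit powers .
qed

end
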